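(* Let $\varepsilon>0$, let $\widetilde M_f,\widetilde M_g$ be as in the context, and let $\varphi:\widetilde M_f\to\widetilde M_g$ be the continuous map $\varphi=\phi_1\cup\cdots\cup\phi_{\eta_f}$ obtained from a leaf assignment whose path extensions agree pairwise at least common ancestors of leaves. Suppose that for every leaf node $w$ of $\widetilde M_g$ with $w\notin\mathrm{Im}(\varphi)$, the nearest ancestor $w^a$ of $w$ lying in $\mathrm{Im}(\varphi)$ satisfies $|\tilde g(w^a)-\tilde g(w)|\le2\varepsilon$. Then for every point $x\in\widetilde M_g\setminus\mathrm{Im}(\varphi)$, the nearest ancestor $x^a$ of $x$ lying in $\mathrm{Im}(\varphi)$ satisfies $|\tilde g(x^a)-\tilde g(x)|\le 2\varepsilon$.
   Context: A finite merge tree is a finite rooted tree regarded as a topological space, with a continuous height function strictly increasing along each edge toward the root. Let $M_f$ (height $\tilde f$, root $r_f$) and $M_g$ (height $\tilde g$, root $r_g$) be finite merge trees with $\tilde g(r_g)=\tilde f(r_f)+\varepsilon$. Let $H=\{\tilde f(u): u \text{ a node of } M_f\}\cup\{\tilde g(w)-\varepsilon: w\text{ a node of } M_g\}$. $\widetilde M_f$ is obtained from $M_f$ by inserting a degree-two node at every point $x$ with $\tilde f(x)\in H$ not already a node; $\widetilde M_g$ from $M_g$ by inserting degree-two nodes at all points with $\tilde g$-value in $H+\varepsilon$ not already nodes. Let $u_1,\dots,u_{\eta_f}$ be the leaves of $\widetilde M_f$, and $\phi$ assign to each $u_i$ a node $\phi(u_i)$ of $\widetilde M_g$ with $\tilde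 g(\phi(u_i))=\tilde f(u_i)+\varepsilon$. With $P_i$ the path from $u_i$ to the root of $\widetilde M_f$ and $P_i'$ that from $\phi(u_i)$ to the root of $\widetilde M_g$, $\phi_i:P_i\to P_i'$ sends $x$ to the unique point of $P_i'$ with $\tilde g$-value $\tilde f(x)+\varepsilon$; it is assumed $\phi_i(v)=\phi_j(v)$ for $v=\mathrm{LCA}(u_i,u_j)$ (lowest common ancestor) for all $i\ne j$, so $\varphi(x)=\phi_i(x)$ for $x\in P_i$ is well-defined. An ancestor of a point $x$ is a point on the upward path from $x$ to the root; the root of $\widetilde M_g$ lies in $\mathrm{Im}(\varphi)$, so nearest ancestors in the image exist. *)

theory Defs
  imports Complex_Main
begin

record 'v mtree =
  mt_V :: "'v set"
  mt_par :: "'v \<Rightarrow> 'v"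
  mt_root :: 'v
  mt_h :: "'v \<Rightarrow> real"

definition mt_edges :: "'v mtree \<Rightarrow> ('v \<times> 'v) set" where
  "mt_edges T = {(v, mt_par T v) | v. v \<in> mt_V T - {mt_root T}}"

definition merge_tree :: "'v mtree \<Rightarrow> bool" where
  "merge_tree T \<longleftrightarrow> finite (mt_V T) \<and> mt_root T \<in> mt_V T \<and>
     (\<forall>v \<in> mt_V T - {mt_root T}. mt_par T v \<in> mt_V T \<and> mt_h T v < mt_h T (mt_par T v)) \<and>
     (\<forall>v \<in> mt_V T. (v, mt_root T) \<in> (mt_edges T)\<^sup>*)"

text \<open>Points of the underlying topological space: a point is a pair (v, t) lying on the
edge from node v to its parent at height t (with h v \<le> t < h (par v)), or the root
point (root, h root).  The node v itself is the point (v, h v).  The height function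
on points is snd.\<close>

definition mt_points :: "'v mtree \<Rightarrow> ('v \<times> real) set" where
  "mt_points T = {(v, t). v \<in> mt_V T - {mt_root T} \<and> mt_h T v \<le> t \<and> t < mt_h T (mt_par T v)}
                 \<union> {(mt_root T, mt_h T (mt_root T))}"

definition mt_node_points :: "'v mtree \<Rightarrow> ('v \<times> real) set" where
  "mt_node_points T = (\<lambda>v. (v, mt_h T v)) ` mt_V T"

definition mt_anc :: "'v mtree \<Rightarrow> ('v \<times> real) \<Rightarrow> ('v \<times> real) \<Rightarrow> bool" where
  "mt_anc T x y \<longleftrightarrow> x \<in> mt_points T \<and> y \<in> mt_points T \<and>
     (fst x, fst y) \<in> (mt_edges T)\<^sup>* \<and> snd x \<le> snd y"

text \<open>Leaves: points with no other point below them (these are the leaf nodes of the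
tree and of any subdivision of it by degree-two nodes).\<close>
definition mt_leaves :: "'v mtree \<Rightarrow> ('v \<times> real) set" where
  "mt_leaves T = {x \<in> mt_points T. \<forall>y. mt_anc T y x \<longrightarrow> y = x}"

definition mt_lca :: "'v mtree \<Rightarrow> ('v \<times> real) \<Rightarrow> ('v \<times> real) \<Rightarrow> ('v \<times> real)" where
  "mt_lca T x y = (THE z. mt_anc T x z \<and> mt_anc T y z \<and>
                      (\<forall>z'. mt_anc T x z' \<and> mt_anc T y z' \<longrightarrow> mt_anc T z z'))"

definition nearest_anc :: "'v mtree \<Rightarrow> ('v \<times> real) set \<Rightarrow> ('v \<times> real) \<Rightarrow> ('v \<times> real)" where
  "nearest_anc T S x = (THE y. y \<in> S \<and> mt_anc T x y \<and> (\<forall>z \<in> S. mt_anc T x z \<longrightarrow> mt_anc T y z))"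

definition Hset :: "'v mtree \<Rightarrow> 'w mtree \<Rightarrow> real \<Rightarrow> real set" where
  "Hset F G \<epsilon> = mt_h F ` mt_V F \<union> (\<lambda>w. mt_h G w - \<epsilon>) ` mt_V G"

definition subdiv_nodes_g :: "'v mtree \<Rightarrow> 'w mtree \<Rightarrow> real \<Rightarrow> ('w \<times> real) set" where
  "subdiv_nodes_g F G \<epsilon> = mt_node_points G \<union>
      {x \<in> mt_points G. snd x \<in> (\<lambda>t. t + \<epsilon>) ` Hset F G \<epsilon>}"

definition path_ext :: "'w mtree \<Rightarrow> real \<Rightarrow> ('v \<times> real \<Rightarrow> 'w \<times> real) \<Rightarrow> ('v \<times> real) \<Rightarrow> ('v \<times> real) \<Rightarrow> ('w \<times> real)" where
  "path_ext G \<epsilon> \<phi> u x = (THE y. mt_anc G (\<phi> u) y \<and> snd y = snd x + \<epsilon>)"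

definition image_phi :: "'v mtree \<Rightarrow> 'w mtree \<Rightarrow> real \<Rightarrow> ('v \<times> real \<Rightarrow> 'w \<times> real) \<Rightarrow> ('w \<times> real) set" where
  "image_phi F G \<epsilon> \<phi> = (\<Union>u \<in> mt_leaves F. path_ext G \<epsilon> \<phi> u ` {x. mt_anc F u x})"

end

theory Submission imports Defs begin

text \<open>The image of \<open>\<varphi>\<close> is the upward closure of the finitely many points \<open>\<phi>(u)\<close>, so a point
lies above an image point only if it is itself in the image.  Given \<open>x \<notin> Im(\<varphi>)\<close>, pick a leaf
\<open>w\<close> below \<open>x\<close>; then \<open>w \<notin> Im(\<varphi>)\<close>, and since the ancestors of \<open>w\<close> form a chain, the nearest
image ancestor \<open>a\<close> of \<open>w\<close> lies above \<open>x\<close> and is also the nearest one of \<open>x\<close>.  Hence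
\<open>g(a) - g(x) \<le> g(a) - g(w) \<le> 2\<epsilon>\<close>.\<close>

definition mt_upset :: "'v mtree \<Rightarrow> ('v \<times> real) set \<Rightarrow> ('v \<times> real) set" where
  "mt_upset T P = {y. \<exists>p \<in> P. mt_anc T p y}"

definition is_nearest_anc :: "'v mtree \<Rightarrow> ('v \<times> real) set \<Rightarrow> ('v \<times> real) \<Rightarrow> ('v \<times> real) \<Rightarrow> bool" where
  "is_nearest_anc T S x a \<longleftrightarrow> a \<in> S \<and> mt_anc T x a \<and> (\<forall>z \<in> S. mt_anc T x z \<longrightarrow> mt_anc T a z)"

lemma mt_edges_iff: "(a, b) \<in> mt_edges T \<longleftrightarrow> a \<in> mt_V T - {mt_root T} \<and> b = mt_par T a"
  by (auto simp: mt_edges_def)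

lemma mt_h_mono_rtrancl:
  assumes "merge_tree T" "(a, b) \<in> (mt_edges T)\<^sup>*"
  shows "mt_h T a \<le> mt_h T b"
  using assms(2)
proof (induction rule: rtrancl_induct)
  case (step y z)
  then show ?case using assms(1) by (force simp: mt_edges_iff merge_tree_def)
qed simp

lemma rtrancl_mt_edges_neqD:
  assumes "merge_tree T" "(a, b) \<in> (mt_edges T)\<^sup>*" "a \<noteq> b"
  shows "a \<in> mt_V T - {mt_root T} \<and> mt_h T (mt_par T a) \<le> mt_h T b"
  using assms(2,3)
proof (cases rule: converse_rtranclE)
  case (step c)
  then show ?thesis using mt_h_mono_rtrancl[OF assms(1)] by (auto simp: mt_edges_iff)
qed simp

lemma mt_h_strict_mono_rtrancl:
  assumes "merge_tree T" "(a, b) \<in> (mt_edges T)\<^sup>*" "a \<noteq> b"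
  shows "mt_h T a < mt_h T b"
  using rtrancl_mt_edges_neqD[OF assms] assms(1) unfolding merge_tree_def by force

lemma rtrancl_mt_edges_comparable:
  assumes "(a, c) \<in> (mt_edges T)\<^sup>*" "(a, b) \<in> (mt_edges T)\<^sup>*"
  shows "(b, c) \<in> (mt_edges T)\<^sup>* \<or> (c, b) \<in> (mt_edges T)\<^sup>*"
  using assms(1)
proof (induction rule: rtrancl_induct)
  case base
  then show ?case using assms(2) by simp
next
  case (step y z)
  from step.IH show ?case
  proof
    assume "(b, y) \<in> (mt_edges T)\<^sup>*"
    then show ?thesis using step(2) by auto
  next
    assume yb: "(y, b) \<in> (mt_edges T)\<^sup>*"
    show ?thesis
    proof (cases "y = b")
      case True
      then show ?thesis using step(2) by auto
    next
      case False
      from yb False show ?thesis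
      proof (cases rule: converse_rtranclE)
        case (step y')
        then show ?thesis using \<open>(y, z) \<in> mt_edges T\<close> by (auto simp: mt_edges_iff)
      qed simp
    qed
  qed
qed

lemma mt_points_cases:
  "x \<in> mt_points T \<Longrightarrow>
   (fst x \<in> mt_V T - {mt_root T} \<and> mt_h T (fst x) \<le> snd x \<and> snd x < mt_h T (mt_par T (fst x)))
   \<or> x = (mt_root T, mt_h T (mt_root T))"
  by (auto simp: mt_points_def)

lemma mt_points_fst_in_V: "merge_tree T \<Longrightarrow> x \<in> mt_points T \<Longrightarrow> fst x \<in> mt_V T"
  by (auto simp: mt_points_def merge_tree_def)

lemma mt_points_h_le: "x \<in> mt_points T \<Longrightarrow> mt_h T (fst x) \<le> snd x"
  by (auto simp: mt_points_def)

lemma mt_points_le_root: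
  assumes T: "merge_tree T" and x: "x \<in> mt_points T"
  shows "snd x \<le> mt_h T (mt_root T)"
  using mt_points_cases[OF x]
proof
  assume x_edge: "fst x \<in> mt_V T - {mt_root T} \<and> mt_h T (fst x) \<le> snd x
    \<and> snd x < mt_h T (mt_par T (fst x))"
  then have "(mt_par T (fst x), mt_root T) \<in> (mt_edges T)\<^sup>*"
    using T by (auto simp: merge_tree_def)
  then show ?thesis using mt_h_mono_rtrancl[OF T] x_edge by force
qed simp

lemma node_in_mt_points: "merge_tree T \<Longrightarrow> v \<in> mt_V T \<Longrightarrow> (v, mt_h T v) \<in> mt_points T"
  by (cases "v = mt_root T") (auto simp: mt_points_def merge_tree_def)

lemma mt_anc_trans: "mt_anc T x y \<Longrightarrow> mt_anc T y z \<Longrightarrow> mt_anc T x z"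
  by (auto simp: mt_anc_def)

lemma mt_anc_antisym:
  assumes T: "merge_tree T" and "mt_anc T x y" "mt_anc T y x"
  shows "x = y"
proof -
  have xy: "(fst x, fst y) \<in> (mt_edges T)\<^sup>*" and yx: "(fst y, fst x) \<in> (mt_edges T)\<^sup>*"
    using assms(2,3) unfolding mt_anc_def by auto
  have "fst x = fst y"
    using mt_h_strict_mono_rtrancl[OF T xy] mt_h_mono_rtrancl[OF T yx] by fastforce
  then show ?thesis using assms unfolding mt_anc_def by (simp add: prod_eq_iff)
qed

lemma mt_anc_root: "merge_tree T \<Longrightarrow> x \<in> mt_points T \<Longrightarrow> mt_anc T x (mt_root T, mt_h T (mt_root T))"
  using mt_points_fst_in_V[of T x] mt_points_le_root[of T x]
  by (auto simp: mt_anc_def merge_tree_def mt_points_def)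

lemma mt_anc_linear:
  assumes T: "merge_tree T" and p: "mt_anc T x p" and q: "mt_anc T x q" and le: "snd p \<le> snd q"
  shows "mt_anc T p q"
proof (cases "(fst p, fst q) \<in> (mt_edges T)\<^sup>*")
  case True
  then show ?thesis using p q le by (auto simp: mt_anc_def)
next
  case False
  have "(fst x, fst p) \<in> (mt_edges T)\<^sup>*" "(fst x, fst q) \<in> (mt_edges T)\<^sup>*"
    using p q by (simp_all add: mt_anc_def)
  then have qp: "(fst q, fst p) \<in> (mt_edges T)\<^sup>*" "fst q \<noteq> fst p"
    using False rtrancl_mt_edges_comparable by (metis, auto)
  from rtrancl_mt_edges_neqD[OF T qp]
  have q_edge: "fst q \<in> mt_V T - {mt_root T}" "mt_h T (mt_par T (fst q)) \<le> mt_h T (fst p)"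
    by auto
  have "q \<in> mt_points T" "p \<in> mt_points T" using p q by (auto simp: mt_anc_def)
  with q_edge le show ?thesis
    using mt_points_cases[of q T] mt_points_h_le[of p T] by auto
qed

lemma mt_anc_at_height:
  assumes T: "merge_tree T" and x: "x \<in> mt_points T"
    and s: "snd x \<le> s" "s \<le> mt_h T (mt_root T)"
  shows "\<exists>y. mt_anc T x y \<and> snd y = s"
proof -
  have "(fst x, mt_root T) \<in> (mt_edges T)\<^sup>*"
    using T mt_points_fst_in_V[OF T x] by (auto simp: merge_tree_def)
  then have "\<forall>t. (fst x, t) \<in> mt_points T \<longrightarrow> t \<le> s \<longrightarrow> (\<exists>y. mt_anc T (fst x, t) y \<and> snd y = s)"
  proof (induction rule: converse_rtrancl_induct)
    case base
    show ?case
    proof (intro allI impI)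
      fix t assume t: "(mt_root T, t) \<in> mt_points T" "t \<le> s"
      then have "t = s" using s by (auto simp: mt_points_def)
      then show "\<exists>y. mt_anc T (mt_root T, t) y \<and> snd y = s"
        using t by (auto simp: mt_anc_def)
    qed
  next
    case (step v v')
    show ?case
    proof (intro allI impI)
      fix t assume t: "(v, t) \<in> mt_points T" "t \<le> s"
      have v: "v \<in> mt_V T - {mt_root T}" "v' = mt_par T v" using step(1) by (auto simp: mt_edges_iff)
      show "\<exists>y. mt_anc T (v, t) y \<and> snd y = s"
      proof (cases "s < mt_h T v'")
        case True
        then have "(v, s) \<in> mt_points T" using t v by (auto simp: mt_points_def)
        then show ?thesis using t by (auto simp: mt_anc_def)
      next
        case False
        have v'_pt: "(v', mt_h T v') \<in> mt_points T"
          using node_in_mt_points[OF T] v T by (auto simp: merge_tree_def)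
        obtain y where y: "mt_anc T (v', mt_h T v') y" "snd y = s"
          using step(3) v'_pt False by force
        have "mt_anc T (v, t) (v', mt_h T v')"
          using t v v'_pt step(1) by (auto simp: mt_anc_def mt_points_def)
        then show ?thesis using y mt_anc_trans by blast
      qed
    qed
  qed
  then show ?thesis using x s by (metis prod.collapse)
qed

lemma mt_anc_at_height_unique:
  assumes "merge_tree T" "mt_anc T x y" "mt_anc T x y'" "snd y = snd y'"
  shows "y = y'"
  using assms mt_anc_linear mt_anc_antisym by (metis order_refl)

lemma leaf_below:
  assumes T: "merge_tree T" and x: "x \<in> mt_points T"
  shows "\<exists>w \<in> mt_leaves T. mt_anc T w x"
proof -
  let ?N = "{v \<in> mt_V T. (v, fst x) \<in> (mt_edges T)\<^sup>*}"
  have N: "finite ?N" "?N \<noteq> {}"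
    using T mt_points_fst_in_V[OF T x] by (auto simp: merge_tree_def)
  define v where "v = arg_min_on (mt_h T) ?N"
  have v: "v \<in> ?N" and v_min: "\<forall>v' \<in> ?N. mt_h T v \<le> mt_h T v'"
    unfolding v_def using arg_min_if_finite(1)[OF N] arg_min_least[OF N] by blast+
  have v_pt: "(v, mt_h T v) \<in> mt_points T" using node_in_mt_points[OF T] v by auto
  have "(v, mt_h T v) \<in> mt_leaves T"
    unfolding mt_leaves_def
  proof (intro CollectI conjI allI impI v_pt)
    fix y assume y: "mt_anc T y (v, mt_h T v)"
    then have y_pt: "y \<in> mt_points T" and yv: "(fst y, v) \<in> (mt_edges T)\<^sup>*"
      by (auto simp: mt_anc_def)
    then have "mt_h T v \<le> mt_h T (fst y)"
      using v v_min mt_points_fst_in_V[OF T y_pt] by auto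
    moreover have "mt_h T (fst y) \<le> snd y" "snd y \<le> mt_h T v"
      using mt_points_h_le[OF y_pt] y by (auto simp: mt_anc_def)
    ultimately show "y = (v, mt_h T v)"
      using mt_h_strict_mono_rtrancl[OF T yv] by (force simp: prod_eq_iff)
  qed
  moreover have "mt_anc T (v, mt_h T v) x"
    using v_pt x v mt_h_mono_rtrancl[OF T, of v "fst x"] mt_points_h_le[OF x]
    by (auto simp: mt_anc_def)
  ultimately show ?thesis by blast
qed

lemma mt_leaves_nonempty:
  assumes T: "merge_tree T"
  shows "mt_leaves T \<noteq> {}"
proof -
  have "mt_root T \<in> mt_V T" using T by (simp add: merge_tree_def)
  then show ?thesis using leaf_below[OF T node_in_mt_points[OF T]] by blast
qed

lemma mt_leaves_subset_nodes:
  assumes T: "merge_tree T"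
  shows "mt_leaves T \<subseteq> mt_node_points T"
proof
  fix x assume x: "x \<in> mt_leaves T"
  then have x_pt: "x \<in> mt_points T" by (auto simp: mt_leaves_def)
  have "mt_anc T (fst x, mt_h T (fst x)) x"
    using node_in_mt_points[OF T mt_points_fst_in_V[OF T x_pt]] x_pt mt_points_h_le[OF x_pt]
    by (auto simp: mt_anc_def)
  then have "(fst x, mt_h T (fst x)) = x" using x unfolding mt_leaves_def by blast
  then show "x \<in> mt_node_points T"
    unfolding mt_node_points_def using mt_points_fst_in_V[OF T x_pt]
    by (rule image_eqI[where f = "\<lambda>v. (v, mt_h T v)", OF sym])
qed

lemma finite_mt_leaves:
  assumes "merge_tree T"
  shows "finite (mt_leaves T)"
proof (rule finite_subset[OF mt_leaves_subset_nodes[OF assms]])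
  show "finite (mt_node_points T)" using assms by (simp add: mt_node_points_def merge_tree_def)
qed

lemma subdiv_nodes_g_subset_mt_points: "merge_tree G \<Longrightarrow> subdiv_nodes_g F G \<epsilon> \<subseteq> mt_points G"
  using node_in_mt_points by (auto simp: subdiv_nodes_g_def mt_node_points_def)

lemma nearest_anc_eqI: "merge_tree T \<Longrightarrow> is_nearest_anc T S x a \<Longrightarrow> nearest_anc T S x = a"
  unfolding nearest_anc_def is_nearest_anc_def
  by (rule the_equality) (auto intro: mt_anc_antisym)

lemma mt_upset_anc_closed: "y \<in> mt_upset T P \<Longrightarrow> mt_anc T y z \<Longrightarrow> z \<in> mt_upset T P"
  unfolding mt_upset_def using mt_anc_trans by blast

lemma root_in_mt_upset:
  "merge_tree T \<Longrightarrow> p \<in> P \<Longrightarrow> p \<in> mt_points T \<Longrightarrow> (mt_root T, mt_h T (mt_root T)) \<in> mt_upset T P"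
  unfolding mt_upset_def using mt_anc_root by blast

text \<open>Nearest ancestors in the upward closure of a finite set \<open>P\<close> exist because, by this
lemma, it suffices to search among the finitely many points whose height is a node height,
the height of a point of \<open>P\<close>, or that of the base point.\<close>

lemma mt_anc_lowest_common_on_edge:
  assumes T: "merge_tree T" and p: "mt_anc T p z" and x: "mt_anc T x z"
  defines "t \<equiv> max (mt_h T (fst z)) (max (snd p) (snd x))"
  shows "mt_anc T p (fst z, t) \<and> mt_anc T x (fst z, t) \<and> t \<le> snd z"
proof -
  have z_pt: "z \<in> mt_points T" using p by (auto simp: mt_anc_def)
  have t_le: "t \<le> snd z" using mt_points_h_le[OF z_pt] p x by (auto simp: t_def mt_anc_def)
  have "(fst z, t) \<in> mt_points T"
    using mt_points_cases[OF z_pt]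
  proof
    assume "fst z \<in> mt_V T - {mt_root T} \<and> mt_h T (fst z) \<le> snd z
      \<and> snd z < mt_h T (mt_par T (fst z))"
    then show ?thesis using t_le by (auto simp: t_def mt_points_def)
  next
    assume "z = (mt_root T, mt_h T (mt_root T))"
    then show ?thesis using t_le z_pt by (auto simp: t_def)
  qed
  then show ?thesis using p x t_le by (auto simp: mt_anc_def t_def)
qed

lemma nearest_anc_in_mt_upset_exists:
  assumes T: "merge_tree T" and P: "finite P" and x: "x \<in> mt_points T"
    and y: "y \<in> mt_upset T P" "mt_anc T x y"
  shows "\<exists>a. is_nearest_anc T (mt_upset T P) x a"
proof -
  define D where "D = (mt_V T \<times> (mt_h T ` mt_V T \<union> snd ` P \<union> {snd x}))
    \<inter> mt_upset T P \<inter> Collect (mt_anc T x)"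
  have "finite D" using T P unfolding D_def merge_tree_def by auto
  have below: "\<exists>c \<in> D. snd c \<le> snd z" if z: "z \<in> mt_upset T P" "mt_anc T x z" for z
  proof -
    obtain p where p: "p \<in> P" "mt_anc T p z" using z by (auto simp: mt_upset_def)
    define t where "t = max (mt_h T (fst z)) (max (snd p) (snd x))"
    have c: "mt_anc T p (fst z, t)" "mt_anc T x (fst z, t)" "t \<le> snd z"
      using mt_anc_lowest_common_on_edge[OF T p(2) z(2)] by (simp_all add: t_def)
    have "fst z \<in> mt_V T" using mt_points_fst_in_V[OF T] p by (auto simp: mt_anc_def)
    moreover have "t = mt_h T (fst z) \<or> t = snd p \<or> t = snd x" by (auto simp: t_def max_def)
    ultimately have "(fst z, t) \<in> D"
      using c p unfolding D_def mt_upset_def by auto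
    then show ?thesis using c(3) by (intro bexI[of _ "(fst z, t)"]) auto
  qed
  have D: "finite D" "D \<noteq> {}" using below[OF y] \<open>finite D\<close> by auto
  define c where "c = arg_min_on snd D"
  have c: "c \<in> D" and c_min: "\<forall>c' \<in> D. snd c \<le> snd c'"
    unfolding c_def using arg_min_if_finite(1)[OF D] arg_min_least[OF D] by blast+
  have "is_nearest_anc T (mt_upset T P) x c"
    unfolding is_nearest_anc_def
  proof (intro conjI ballI impI)
    show "c \<in> mt_upset T P" "mt_anc T x c" using c by (auto simp: D_def)
    fix z assume z: "z \<in> mt_upset T P" "mt_anc T x z"
    then obtain c' where "c' \<in> D" "snd c' \<le> snd z" using below by blast
    then have "snd c \<le> snd z" using c_min by force
    then show "mt_anc T c z" using mt_anc_linear[OF T \<open>mt_anc T x c\<close> z(2)] by blast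
  qed
  then show ?thesis by blast
qed

lemma is_nearest_anc_above:
  assumes T: "merge_tree T" and S: "\<And>y z. y \<in> S \<Longrightarrow> mt_anc T y z \<Longrightarrow> z \<in> S"
    and a: "is_nearest_anc T S w a" and wx: "mt_anc T w x" and x: "x \<notin> S"
  shows "is_nearest_anc T S x a \<and> snd x \<le> snd a"
proof -
  have a_S: "a \<in> S" and wa: "mt_anc T w a" using a by (auto simp: is_nearest_anc_def)
  have x_le_a: "snd x \<le> snd a"
  proof (rule ccontr)
    assume "\<not> snd x \<le> snd a"
    then have "mt_anc T a x" using mt_anc_linear[OF T wa wx] by simp
    then show False using S a_S x by blast
  qed
  then have "mt_anc T x a" using mt_anc_linear[OF T wx wa] by simp
  then show ?thesis
    using a x_le_a mt_anc_trans[OF wx] by (auto simp: is_nearest_anc_def)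
qed

lemma image_phi_eq_mt_upset:
  assumes F: "merge_tree F" and G: "merge_tree G"
    and root: "mt_h G (mt_root G) = mt_h F (mt_root F) + \<epsilon>"
    and \<phi>: "\<forall>u \<in> mt_leaves F. \<phi> u \<in> mt_points G \<and> snd (\<phi> u) = snd u + \<epsilon>"
  shows "image_phi F G \<epsilon> \<phi> = mt_upset G (\<phi> ` mt_leaves F)"
proof -
  have path_ext: "mt_anc G (\<phi> u) (path_ext G \<epsilon> \<phi> u x) \<and> snd (path_ext G \<epsilon> \<phi> u x) = snd x + \<epsilon>"
    if u: "u \<in> mt_leaves F" and x: "mt_anc F u x" for u x
  proof -
    have "snd u \<le> snd x" "snd x \<le> mt_h F (mt_root F)"
      using x mt_points_le_root[OF F] by (auto simp: mt_anc_def)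
    then have "\<exists>!y. mt_anc G (\<phi> u) y \<and> snd y = snd x + \<epsilon>"
      using mt_anc_at_height[OF G] mt_anc_at_height_unique[OF G] \<phi> u root by fastforce
    then show ?thesis unfolding path_ext_def by (rule theI')
  qed
  show ?thesis
  proof (intro set_eqI iffI)
    fix y assume "y \<in> image_phi F G \<epsilon> \<phi>"
    then obtain u x where "u \<in> mt_leaves F" "mt_anc F u x" "y = path_ext G \<epsilon> \<phi> u x"
      by (auto simp: image_phi_def)
    then show "y \<in> mt_upset G (\<phi> ` mt_leaves F)"
      using path_ext unfolding mt_upset_def by blast
  next
    fix y assume "y \<in> mt_upset G (\<phi> ` mt_leaves F)"
    then obtain u where u: "u \<in> mt_leaves F" and y: "mt_anc G (\<phi> u) y"
      by (auto simp: mt_upset_def)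
    have "y \<in> mt_points G" "snd (\<phi> u) \<le> snd y" using y by (auto simp: mt_anc_def)
    moreover have "snd (\<phi> u) = snd u + \<epsilon>" using \<phi> u by blast
    ultimately have "snd u \<le> snd y - \<epsilon>" "snd y - \<epsilon> \<le> mt_h F (mt_root F)"
      using root mt_points_le_root[OF G, of y] by auto
    moreover have "u \<in> mt_points F" using u by (simp add: mt_leaves_def)
    ultimately obtain x where x: "mt_anc F u x" "snd x = snd y - \<epsilon>"
      using mt_anc_at_height[OF F] by blast
    then have "path_ext G \<epsilon> \<phi> u x = y"
      using path_ext[OF u x(1)] mt_anc_at_height_unique[OF G _ y] by simp
    then show "y \<in> image_phi F G \<epsilon> \<phi>" unfolding image_phi_def using u x by blast
  qed
qed

theorem lemma4p9:
  fixes F :: "'v mtree" and G :: "'w mtree" and \<epsilon> :: real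
    and \<phi> :: "'v \<times> real \<Rightarrow> 'w \<times> real"
  assumes "\<epsilon> > 0"
    and "merge_tree F" and "merge_tree G"
    and "mt_h G (mt_root G) = mt_h F (mt_root F) + \<epsilon>"
    and "\<forall>u \<in> mt_leaves F. \<phi> u \<in> subdiv_nodes_g F G \<epsilon> \<and> snd (\<phi> u) = snd u + \<epsilon>"
    and "\<forall>u1 \<in> mt_leaves F. \<forall>u2 \<in> mt_leaves F. u1 \<noteq> u2 \<longrightarrow>
           path_ext G \<epsilon> \<phi> u1 (mt_lca F u1 u2) = path_ext G \<epsilon> \<phi> u2 (mt_lca F u1 u2)"
    and "\<forall>w \<in> mt_leaves G. w \<notin> image_phi F G \<epsilon> \<phi> \<longrightarrow>
           \<bar>snd (nearest_anc G (image_phi F G \<epsilon> \<phi>) w) - snd w\<bar> \<le> 2 * \<epsilon>"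
  shows "\<forall>x \<in> mt_points G - image_phi F G \<epsilon> \<phi>.
           \<bar>snd (nearest_anc G (image_phi F G \<epsilon> \<phi>) x) - snd x\<bar> \<le> 2 * \<epsilon>"
proof
  note F = assms(2) and G = assms(3) and leaf_gap = assms(7)
  have \<phi>: "\<forall>u \<in> mt_leaves F. \<phi> u \<in> mt_points G \<and> snd (\<phi> u) = snd u + \<epsilon>"
    using assms(5) subdiv_nodes_g_subset_mt_points[OF G] by blast
  define S where "S = mt_upset G (\<phi> ` mt_leaves F)"
  have S_eq: "image_phi F G \<epsilon> \<phi> = S"
    unfolding S_def using image_phi_eq_mt_upset[OF F G assms(4) \<phi>] .
  have S_closed: "\<And>y z. y \<in> S \<Longrightarrow> mt_anc G y z \<Longrightarrow> z \<in> S"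
    unfolding S_def by (rule mt_upset_anc_closed)
  fix x assume "x \<in> mt_points G - image_phi F G \<epsilon> \<phi>"
  then have x: "x \<in> mt_points G" "x \<notin> S" by (auto simp: S_eq)
  obtain w where w: "w \<in> mt_leaves G" "mt_anc G w x" using leaf_below[OF G x(1)] by blast
  have w_pt: "w \<in> mt_points G" using w(2) by (simp add: mt_anc_def)
  have "w \<notin> S" using S_closed w(2) x(2) by blast
  obtain u where "u \<in> mt_leaves F" using mt_leaves_nonempty[OF F] by blast
  then have "(mt_root G, mt_h G (mt_root G)) \<in> S"
    unfolding S_def using \<phi> by (blast intro: root_in_mt_upset[OF G])
  then have "\<exists>a. is_nearest_anc G S w a"
    unfolding S_def using finite_mt_leaves[OF F]
    by (intro nearest_anc_in_mt_upset_exists[OF G _ w_pt _ mt_anc_root[OF G w_pt]]) auto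
  then obtain a where a: "is_nearest_anc G S w a" ..
  have "\<bar>snd (nearest_anc G S w) - snd w\<bar> \<le> 2 * \<epsilon>"
    using leaf_gap w(1) \<open>w \<notin> S\<close> unfolding S_eq by blast
  then have "\<bar>snd a - snd w\<bar> \<le> 2 * \<epsilon>" by (simp add: nearest_anc_eqI[OF G a])
  moreover have "is_nearest_anc G S x a" "snd x \<le> snd a"
    using is_nearest_anc_above[OF G S_closed a w(2) x(2)] by auto
  moreover have "snd w \<le> snd x" using w(2) by (simp add: mt_anc_def)
  ultimately show "\<bar>snd (nearest_anc G (image_phi F G \<epsilon> \<phi>) x) - snd x\<bar> \<le> 2 * \<epsilon>"
    using nearest_anc_eqI[OF G] by (simp add: S_eq)
qed

end
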